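(* Every epimorphism $E\colon\mathbf{B}\to\mathbf{C}$ in $\mathbf{Lens}$ is a coequaliser in $\mathbf{Lens}$ of its proxy kernel pair, and so is a regular epimorphism in $\mathbf{Lens}$.
   Context: A lens $F\colon \mathbf{A}\to\mathbf{B}$ between small categories consists of a functor $F\colon\mathbf{A}\to\mathbf{B}$ (the get functor) together with, for each object $A$ of $\mathbf{A}$, a function $\varphi_{F,A}$ from the set of morphisms of $\mathbf{B}$ with domain $FA$ to the set of morphisms of $\mathbf{A}$ with domain $A$, such that: $F(\varphi_{F,A}b)=b$; $\varphi_{F,A}(\mathrm{id}_{FA})=\mathrm{id}_A$; and $\varphi_{F,A}(b'\circ b)=\varphi_{F,A'}(b')\circ\varphi_{F,A}(b)$ whenever $b$ has domain $FA$, $A'$ is the codomain of $\varphi_{F,A}b$, and $b'$ has domain $FA'$. $\mathbf{Lens}$ is the category of small categories and lenses, with composite of $F\colon\mathbf{A}\to\mathbf{B}$, $G\colon\mathbf{B}\to\mathbf{C}$ having get functor $G\circ F$ and puts $\varphi_{G\circ F,A}(c)=\varphi_{F,A}(\varphi_{G,FA}(c))$. The proxy kernel pair of a lens $E\colon\mathbf{B}\to\mathbf{C}$ is the pair of lenses $P_1,P_2\colon\mathbf{K}\to\mathbf{B}$ where $\mathbf{K}$ is the pullback in $\mathbf{Cat}$ of the get functor of $E$ along itself, whose objects and morphisms are pairs $\langle x,y\rangle$ with $Ex=Ey$, the get functors of $P_1,P_2$ are the two projections, and the puts are, for each object $K$ of $\mathbf{K}$ and morphism $b$ of $\mathbf{B}$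 with appropriate domain, $\varphi_{P_1,K}(b)=\langle b,\varphi_{E,P_2K}(Eb)\rangle$ and $\varphi_{P_2,K}(b)=\langle\varphi_{E,P_1K}(Eb),b\rangle$. *)

theory Defs
  imports Main
begin

record ('o, 'm) cat =
  Obj  :: "'o set"
  Mor  :: "'m set"
  Dom  :: "'m \<Rightarrow> 'o"
  Cod  :: "'m \<Rightarrow> 'o"
  Id   :: "'o \<Rightarrow> 'm"
  Comp :: "'m \<Rightarrow> 'm \<Rightarrow> 'm"   (* Comp g f = g \<circ> f *)

definition is_category :: "('o, 'm) cat \<Rightarrow> bool" where
  "is_category A \<longleftrightarrow>
     (\<forall>f\<in>Mor A. Dom A f \<in> Obj A \<and> Cod A f \<in> Obj A) \<and>
     (\<forall>a\<in>Obj A. Id A a \<in> Mor A \<and> Dom A (Id A a) = a \<and> Cod A (Id A a) = a) \<and>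
     (\<forall>f\<in>Mor A. \<forall>g\<in>Mor A. Dom A g = Cod A f \<longrightarrow>
        Comp A g f \<in> Mor A \<and> Dom A (Comp A g f) = Dom A f \<and> Cod A (Comp A g f) = Cod A g) \<and>
     (\<forall>f\<in>Mor A. Comp A (Id A (Cod A f)) f = f \<and> Comp A f (Id A (Dom A f)) = f) \<and>
     (\<forall>f\<in>Mor A. \<forall>g\<in>Mor A. \<forall>h\<in>Mor A. Dom A g = Cod A f \<longrightarrow> Dom A h = Cod A g \<longrightarrow>
        Comp A h (Comp A g f) = Comp A (Comp A h g) f)"

text \<open>A lens consists of a get functor (object part and morphism part) and the puts
  (Put F a b is the lift of b, a morphism of the codomain with domain F a).
  Only values on the carriers are meaningful.\<close>

record ('ao, 'am, 'bo, 'bm) lens =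
  GetO :: "'ao \<Rightarrow> 'bo"
  GetM :: "'am \<Rightarrow> 'bm"
  Put  :: "'ao \<Rightarrow> 'bm \<Rightarrow> 'am"

definition is_lens ::
  "('ao, 'am) cat \<Rightarrow> ('bo, 'bm) cat \<Rightarrow> ('ao, 'am, 'bo, 'bm) lens \<Rightarrow> bool" where
  "is_lens A B F \<longleftrightarrow>
     (\<forall>a\<in>Obj A. GetO F a \<in> Obj B) \<and>
     (\<forall>f\<in>Mor A. GetM F f \<in> Mor B \<and> Dom B (GetM F f) = GetO F (Dom A f) \<and>
                  Cod B (GetM F f) = GetO F (Cod A f)) \<and>
     (\<forall>a\<in>Obj A. GetM F (Id A a) = Id B (GetO F a)) \<and>
     (\<forall>f\<in>Mor A. \<forall>g\<in>Mor A. Dom A g = Cod A f \<longrightarrow>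
        GetM F (Comp A g f) = Comp B (GetM F g) (GetM F f)) \<and>
     (\<forall>a\<in>Obj A. \<forall>b\<in>Mor B. Dom B b = GetO F a \<longrightarrow>
        Put F a b \<in> Mor A \<and> Dom A (Put F a b) = a \<and> GetM F (Put F a b) = b) \<and>
     (\<forall>a\<in>Obj A. Put F a (Id B (GetO F a)) = Id A a) \<and>
     (\<forall>a\<in>Obj A. \<forall>b\<in>Mor B. \<forall>b'\<in>Mor B. Dom B b = GetO F a \<longrightarrow>
        Dom B b' = GetO F (Cod A (Put F a b)) \<longrightarrow>
        Put F a (Comp B b' b) = Comp A (Put F (Cod A (Put F a b)) b') (Put F a b))"

text \<open>Composite of F : A \<rightarrow> B and G : B \<rightarrow> C (diagrammatic order of arguments).\<close>

definition lens_comp ::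
  "('ao, 'am, 'bo, 'bm) lens \<Rightarrow> ('bo, 'bm, 'co, 'cm) lens \<Rightarrow> ('ao, 'am, 'co, 'cm) lens" where
  "lens_comp F G = \<lparr> GetO = GetO G \<circ> GetO F, GetM = GetM G \<circ> GetM F,
                     Put = (\<lambda>a c. Put F a (Put G (GetO F a) c)) \<rparr>"

definition lens_eq ::
  "('ao, 'am) cat \<Rightarrow> ('bo, 'bm) cat \<Rightarrow> ('ao, 'am, 'bo, 'bm) lens \<Rightarrow> ('ao, 'am, 'bo, 'bm) lens \<Rightarrow> bool" where
  "lens_eq A B F G \<longleftrightarrow>
     (\<forall>a\<in>Obj A. GetO F a = GetO G a) \<and>
     (\<forall>f\<in>Mor A. GetM F f = GetM G f) \<and>
     (\<forall>a\<in>Obj A. \<forall>b\<in>Mor B. Dom B b = GetO F a \<longrightarrow> Put F a b = Put G a b)"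

text \<open>Test categories range over all small categories whose objects and morphisms live in
  a fixed type large enough to encode every construction on B and C.\<close>

type_synonym ('bo, 'bm, 'co, 'cm) test_univ = "('bo + 'bm + 'co + 'cm + nat) set"

definition lens_epi ::
  "('bo, 'bm) cat \<Rightarrow> ('co, 'cm) cat \<Rightarrow> ('bo, 'bm, 'co, 'cm) lens \<Rightarrow> bool" where
  "lens_epi B C E \<longleftrightarrow> is_lens B C E \<and>
     (\<forall>(D :: (('bo, 'bm, 'co, 'cm) test_univ, ('bo, 'bm, 'co, 'cm) test_univ) cat) G H.
        is_category D \<longrightarrow> is_lens C D G \<longrightarrow> is_lens C D H \<longrightarrow>
        lens_eq B D (lens_comp E G) (lens_comp E H) \<longrightarrow> lens_eq C D G H)"

definition pk_cat :: "('bo, 'bm) cat \<Rightarrow> ('bo, 'bm, 'co, 'cm) lens \<Rightarrow> ('bo \<times> 'bo, 'bm \<times> 'bm) cat" where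
  "pk_cat B E = \<lparr>
     Obj = {(x, y). x \<in> Obj B \<and> y \<in> Obj B \<and> GetO E x = GetO E y},
     Mor = {(f, g). f \<in> Mor B \<and> g \<in> Mor B \<and> GetM E f = GetM E g},
     Dom = (\<lambda>(f, g). (Dom B f, Dom B g)),
     Cod = (\<lambda>(f, g). (Cod B f, Cod B g)),
     Id = (\<lambda>(x, y). (Id B x, Id B y)),
     Comp = (\<lambda>(g1, g2) (f1, f2). (Comp B g1 f1, Comp B g2 f2)) \<rparr>"

definition pk_P1 :: "('bo, 'bm, 'co, 'cm) lens \<Rightarrow> ('bo \<times> 'bo, 'bm \<times> 'bm, 'bo, 'bm) lens" where
  "pk_P1 E = \<lparr> GetO = fst, GetM = fst,
               Put = (\<lambda>K b. (b, Put E (snd K) (GetM E b))) \<rparr>"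

definition pk_P2 :: "('bo, 'bm, 'co, 'cm) lens \<Rightarrow> ('bo \<times> 'bo, 'bm \<times> 'bm, 'bo, 'bm) lens" where
  "pk_P2 E = \<lparr> GetO = snd, GetM = snd,
               Put = (\<lambda>K b. (Put E (fst K) (GetM E b), b)) \<rparr>"

text \<open>E : B \<rightarrow> C is a coequaliser of P, Q : K \<rightarrow> B, tested against all target categories
  whose objects/morphisms have types 'do, 'dm (fixed by the itself-argument).\<close>

definition lens_coequaliser ::
  "('do \<times> 'dm) itself \<Rightarrow> ('ko, 'km) cat \<Rightarrow> ('bo, 'bm) cat \<Rightarrow> ('co, 'cm) cat \<Rightarrow>
   ('ko, 'km, 'bo, 'bm) lens \<Rightarrow> ('ko, 'km, 'bo, 'bm) lens \<Rightarrow> ('bo, 'bm, 'co, 'cm) lens \<Rightarrow> bool" where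
  "lens_coequaliser _ K B C P Q E \<longleftrightarrow>
     is_lens B C E \<and> lens_eq K C (lens_comp P E) (lens_comp Q E) \<and>
     (\<forall>(D :: ('do, 'dm) cat) G. is_category D \<longrightarrow> is_lens B D G \<longrightarrow>
        lens_eq K D (lens_comp P G) (lens_comp Q G) \<longrightarrow>
        (\<exists>H. is_lens C D H \<and> lens_eq B D (lens_comp E H) G \<and>
             (\<forall>H'. is_lens C D H' \<longrightarrow> lens_eq B D (lens_comp E H') G \<longrightarrow> lens_eq C D H' H)))"

end

theory Submission
  imports Defs
begin

text \<open>An epimorphism E of lenses is surjective on objects. Its image U is closed under
  codomains (lift a morphism along E), so doubling the objects of C outside U gives a category
  with two lenses from C, the inclusion into the base copy and the one sending objects outside U
  to their second copy; they agree after precomposition with E, hence coincide, so U is all of C.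

  A lens E surjective on objects coequalises its proxy kernel pair. A lens G with
  G P1 = G P2 is constant on the fibres of E on objects and morphisms, and its puts satisfy
  Put G x d = Put E x (E (Put G y d)) whenever E x = E y. Hence the mediating lens can be
  defined through an arbitrary lift x of c along E: it sends c to G x, a morphism h out of c to
  G (Put E x h), and puts d at c to E (Put G x d). It is unique because every object and
  morphism of C is in the image of E, and Put E x has E as a retraction.\<close>

lemma is_categoryD:
  assumes "is_category A"
  shows cat_dom: "f \<in> Mor A \<Longrightarrow> Dom A f \<in> Obj A"
    and cat_cod: "f \<in> Mor A \<Longrightarrow> Cod A f \<in> Obj A"
    and cat_id: "a \<in> Obj A \<Longrightarrow> Id A a \<in> Mor A"
    and cat_comp: "f \<in> Mor A \<Longrightarrow> g \<in> Mor A \<Longrightarrow> Dom A g = Cod A f \<Longrightarrow> Comp A g f \<in> Mor A"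
  using assms unfolding is_category_def by auto

lemma is_lensD:
  assumes "is_lens A B F"
  shows get_obj: "a \<in> Obj A \<Longrightarrow> GetO F a \<in> Obj B"
    and get_mor: "f \<in> Mor A \<Longrightarrow> GetM F f \<in> Mor B"
    and get_dom: "f \<in> Mor A \<Longrightarrow> Dom B (GetM F f) = GetO F (Dom A f)"
    and get_cod: "f \<in> Mor A \<Longrightarrow> Cod B (GetM F f) = GetO F (Cod A f)"
    and get_id: "a \<in> Obj A \<Longrightarrow> GetM F (Id A a) = Id B (GetO F a)"
    and get_comp: "f \<in> Mor A \<Longrightarrow> g \<in> Mor A \<Longrightarrow> Dom A g = Cod A f \<Longrightarrow>
        GetM F (Comp A g f) = Comp B (GetM F g) (GetM F f)"
    and put_mor: "a \<in> Obj A \<Longrightarrow> b \<in> Mor B \<Longrightarrow> Dom B b = GetO F a \<Longrightarrow> Put F a b \<in> Mor A"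
    and put_dom: "a \<in> Obj A \<Longrightarrow> b \<in> Mor B \<Longrightarrow> Dom B b = GetO F a \<Longrightarrow> Dom A (Put F a b) = a"
    and get_put: "a \<in> Obj A \<Longrightarrow> b \<in> Mor B \<Longrightarrow> Dom B b = GetO F a \<Longrightarrow> GetM F (Put F a b) = b"
    and put_id: "a \<in> Obj A \<Longrightarrow> Put F a (Id B (GetO F a)) = Id A a"
    and put_comp: "a \<in> Obj A \<Longrightarrow> b \<in> Mor B \<Longrightarrow> b' \<in> Mor B \<Longrightarrow> Dom B b = GetO F a \<Longrightarrow>
        Dom B b' = GetO F (Cod A (Put F a b)) \<Longrightarrow>
        Put F a (Comp B b' b) = Comp A (Put F (Cod A (Put F a b)) b') (Put F a b)"
  using assms unfolding is_lens_def by auto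

section \<open>Renaming the objects and morphisms of a codomain\<close>

definition map_cat :: "('a \<Rightarrow> 'x) \<Rightarrow> ('b \<Rightarrow> 'y) \<Rightarrow> ('a, 'b) cat \<Rightarrow> ('x, 'y) cat" where
  "map_cat eo em A = \<lparr> Obj = eo ` Obj A, Mor = em ` Mor A,
     Dom = (\<lambda>g. eo (Dom A (inv em g))), Cod = (\<lambda>g. eo (Cod A (inv em g))),
     Id = (\<lambda>x. em (Id A (inv eo x))),
     Comp = (\<lambda>g f. em (Comp A (inv em g) (inv em f))) \<rparr>"

definition map_lens :: "('a \<Rightarrow> 'x) \<Rightarrow> ('b \<Rightarrow> 'y) \<Rightarrow> ('co, 'cm, 'a, 'b) lens \<Rightarrow> ('co, 'cm, 'x, 'y) lens" where
  "map_lens eo em L = \<lparr> GetO = eo \<circ> GetO L, GetM = em \<circ> GetM L,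
     Put = (\<lambda>a d. Put L a (inv em d)) \<rparr>"

lemma is_category_map_cat:
  assumes "inj eo" "inj em" "is_category A"
  shows "is_category (map_cat eo em A)"
  using assms unfolding is_category_def map_cat_def by (auto simp: inj_eq)

lemma is_lens_map_lens:
  assumes "inj eo" "inj em" "is_lens C A L"
  shows "is_lens C (map_cat eo em A) (map_lens eo em L)"
  using assms unfolding is_lens_def map_cat_def map_lens_def by (auto simp: inj_eq)

lemma lens_comp_map_lens: "lens_comp E (map_lens eo em L) = map_lens eo em (lens_comp E L)"
  unfolding lens_comp_def map_lens_def by (simp add: comp_assoc)

lemma lens_eq_map_lens_iff:
  assumes "inj eo" "inj em"
  shows "lens_eq C (map_cat eo em A) (map_lens eo em L) (map_lens eo em L') \<longleftrightarrow> lens_eq C A L L'"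
  using assms unfolding lens_eq_def map_cat_def map_lens_def by (auto simp: inj_eq)

section \<open>Epimorphisms of lenses are surjective on objects\<close>

lemma lens_epi_cancel:
  fixes B :: "('bo, 'bm) cat" and C :: "('co, 'cm) cat" and E :: "('bo, 'bm, 'co, 'cm) lens"
    and A :: "('ao, 'am) cat"
    and eo :: "'ao \<Rightarrow> ('bo, 'bm, 'co, 'cm) test_univ" and em :: "'am \<Rightarrow> ('bo, 'bm, 'co, 'cm) test_univ"
  assumes epi: "lens_epi B C E" and eo: "inj eo" and em: "inj em" and A: "is_category A"
    and G: "is_lens C A G" and H: "is_lens C A H"
    and GH: "lens_eq B A (lens_comp E G) (lens_comp E H)"
  shows "lens_eq C A G H"
proof -
  have "lens_eq B (map_cat eo em A) (lens_comp E (map_lens eo em G)) (lens_comp E (map_lens eo em H))"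
    using GH unfolding lens_comp_map_lens lens_eq_map_lens_iff[OF eo em] .
  then have "lens_eq C (map_cat eo em A) (map_lens eo em G) (map_lens eo em H)"
    using epi is_category_map_cat[OF eo em A] is_lens_map_lens[OF eo em G] is_lens_map_lens[OF eo em H]
    unfolding lens_epi_def by blast
  then show ?thesis unfolding lens_eq_map_lens_iff[OF eo em] .
qed

definition cod_closed :: "('co, 'cm) cat \<Rightarrow> 'co set \<Rightarrow> bool" where
  "cod_closed C U \<longleftrightarrow> (\<forall>f\<in>Mor C. Dom C f \<in> U \<longrightarrow> Cod C f \<in> U)"

lemma cod_closed_image:
  assumes "is_category B" "is_lens B C E"
  shows "cod_closed C (GetO E ` Obj B)"
  unfolding cod_closed_def
proof (intro ballI impI)
  fix f assume f: "f \<in> Mor C" "Dom C f \<in> GetO E ` Obj B"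
  then obtain x where x: "x \<in> Obj B" "Dom C f = GetO E x" by auto
  then have "Cod B (Put E x f) \<in> Obj B"
    using f assms by (metis cat_cod put_mor)
  moreover have "Cod C f = GetO E (Cod B (Put E x f))"
    using assms(2) x f by (metis get_cod get_put put_mor)
  ultimately show "Cod C f \<in> GetO E ` Obj B" by blast
qed

text \<open>The objects outside U get a second copy (c, True); a morphism of that copy
  stays there as long as its codomain avoids U.\<close>

definition doubled_cat :: "('co, 'cm) cat \<Rightarrow> 'co set \<Rightarrow> ('co \<times> bool, 'cm \<times> bool) cat" where
  "doubled_cat C U = \<lparr> Obj = {(c, b). c \<in> Obj C \<and> (b \<longrightarrow> c \<notin> U)},
     Mor = {(f, b). f \<in> Mor C \<and> (b \<longrightarrow> Dom C f \<notin> U)},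
     Dom = (\<lambda>(f, b). (Dom C f, b)),
     Cod = (\<lambda>(f, b). (Cod C f, b \<and> Cod C f \<notin> U)),
     Id = (\<lambda>(c, b). (Id C c, b)),
     Comp = (\<lambda>(g, b') (f, b). (Comp C g f, b)) \<rparr>"

definition incl_base :: "('co, 'cm, 'co \<times> bool, 'cm \<times> bool) lens" where
  "incl_base = \<lparr> GetO = (\<lambda>c. (c, False)), GetM = (\<lambda>f. (f, False)), Put = (\<lambda>c d. fst d) \<rparr>"

definition incl_doubled :: "('co, 'cm) cat \<Rightarrow> 'co set \<Rightarrow> ('co, 'cm, 'co \<times> bool, 'cm \<times> bool) lens" where
  "incl_doubled C U = \<lparr> GetO = (\<lambda>c. (c, c \<notin> U)), GetM = (\<lambda>f. (f, Dom C f \<notin> U)),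
     Put = (\<lambda>c d. fst d) \<rparr>"

lemma is_category_doubled_cat:
  assumes "is_category C" "cod_closed C U"
  shows "is_category (doubled_cat C U)"
  using assms unfolding is_category_def doubled_cat_def cod_closed_def
  by (auto split: prod.splits)

lemma is_lens_incl_base: "is_lens C (doubled_cat C U) incl_base"
  unfolding is_lens_def doubled_cat_def incl_base_def
  by (auto split: prod.splits)

lemma is_lens_incl_doubled:
  assumes "is_category C" "cod_closed C U"
  shows "is_lens C (doubled_cat C U) (incl_doubled C U)"
  using assms unfolding is_category_def is_lens_def doubled_cat_def incl_doubled_def cod_closed_def
  by (auto split: prod.splits)

lemma lens_eq_comp_incl:
  assumes "is_category B" "is_lens B C E"
  shows "lens_eq B (doubled_cat C (GetO E ` Obj B))
           (lens_comp E incl_base) (lens_comp E (incl_doubled C (GetO E ` Obj B)))"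
  using assms unfolding lens_eq_def lens_comp_def incl_base_def incl_doubled_def
  by (auto simp: cat_dom get_dom)

definition encode_obj :: "'co \<times> bool \<Rightarrow> ('bo, 'bm, 'co, 'cm) test_univ" where
  "encode_obj p = {Inr (Inr (Inl (fst p))), Inr (Inr (Inr (Inr (of_bool (snd p)))))}"

definition encode_mor :: "'cm \<times> bool \<Rightarrow> ('bo, 'bm, 'co, 'cm) test_univ" where
  "encode_mor p = {Inr (Inr (Inr (Inl (fst p)))), Inr (Inr (Inr (Inr (of_bool (snd p)))))}"

lemma inj_encode_obj: "inj encode_obj"
  unfolding inj_def encode_obj_def by (auto simp: doubleton_eq_iff)

lemma inj_encode_mor: "inj encode_mor"
  unfolding inj_def encode_mor_def by (auto simp: doubleton_eq_iff)

lemma lens_epi_surj_obj: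
  fixes B :: "('bo, 'bm) cat" and C :: "('co, 'cm) cat" and E :: "('bo, 'bm, 'co, 'cm) lens"
  assumes B: "is_category B" and C: "is_category C" and epi: "lens_epi B C E"
  shows "Obj C \<subseteq> GetO E ` Obj B"
proof
  fix c assume c: "c \<in> Obj C"
  define U where "U = GetO E ` Obj B"
  have E: "is_lens B C E" using epi unfolding lens_epi_def by blast
  have U: "cod_closed C U" unfolding U_def using cod_closed_image[OF B E] .
  have "lens_eq C (doubled_cat C U) incl_base (incl_doubled C U)"
    using lens_epi_cancel[OF epi inj_encode_obj inj_encode_mor is_category_doubled_cat[OF C U]
        is_lens_incl_base is_lens_incl_doubled[OF C U]] lens_eq_comp_incl[OF B E]
    unfolding U_def by blast
  then have "(c, False) = (c, c \<notin> U)"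
    using c unfolding lens_eq_def incl_base_def incl_doubled_def by auto
  then show "c \<in> U" by simp
qed

section \<open>Lenses surjective on objects coequalise their proxy kernel pair\<close>

lemma lens_eq_pk_comp:
  assumes "is_lens B C E"
  shows "lens_eq (pk_cat B E) C (lens_comp (pk_P1 E) E) (lens_comp (pk_P2 E) E)"
  using assms unfolding lens_eq_def pk_cat_def lens_comp_def pk_P1_def pk_P2_def
  by (auto simp: get_put)

locale pk_cocone =
  fixes B :: "('bo, 'bm) cat" and C :: "('co, 'cm) cat" and D :: "('do, 'dm) cat"
    and E :: "('bo, 'bm, 'co, 'cm) lens" and G :: "('bo, 'bm, 'do, 'dm) lens"
  assumes B: "is_category B" and C: "is_category C"
    and E: "is_lens B C E" and G: "is_lens B D G"
    and surj_obj: "Obj C \<subseteq> GetO E ` Obj B"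
    and coequalises: "lens_eq (pk_cat B E) D (lens_comp (pk_P1 E) G) (lens_comp (pk_P2 E) G)"
begin

lemma G_GetO_fibre:
  assumes "x \<in> Obj B" "y \<in> Obj B" "GetO E x = GetO E y"
  shows "GetO G x = GetO G y"
proof -
  have "(x, y) \<in> Obj (pk_cat B E)" using assms unfolding pk_cat_def by auto
  then show ?thesis
    using coequalises unfolding lens_eq_def lens_comp_def pk_P1_def pk_P2_def by auto
qed

lemma G_GetM_fibre:
  assumes "f \<in> Mor B" "g \<in> Mor B" "GetM E f = GetM E g"
  shows "GetM G f = GetM G g"
proof -
  have "(f, g) \<in> Mor (pk_cat B E)" using assms unfolding pk_cat_def by auto
  then show ?thesis
    using coequalises unfolding lens_eq_def lens_comp_def pk_P1_def pk_P2_def by auto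
qed

lemma G_Put_fibre:
  assumes "x \<in> Obj B" "y \<in> Obj B" "GetO E x = GetO E y" "d \<in> Mor D" "Dom D d = GetO G x"
  shows "Put G x d = Put E x (GetM E (Put G y d))"
proof -
  have "(x, y) \<in> Obj (pk_cat B E)" using assms unfolding pk_cat_def by auto
  then have "Put (lens_comp (pk_P1 E) G) (x, y) d = Put (lens_comp (pk_P2 E) G) (x, y) d"
    using coequalises assms(4,5) unfolding lens_eq_def lens_comp_def pk_P1_def by auto
  then show ?thesis unfolding lens_comp_def pk_P1_def pk_P2_def by auto
qed

lemma E_Put_G_fibre:
  assumes x: "x \<in> Obj B" and y: "y \<in> Obj B" and xy: "GetO E x = GetO E y"
    and d: "d \<in> Mor D" "Dom D d = GetO G x"
  shows "GetM E (Put G x d) = GetM E (Put G y d)"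
proof -
  have "Dom D d = GetO G y" using G_GetO_fibre[OF x y xy] d by simp
  then have q: "Put G y d \<in> Mor B" "Dom B (Put G y d) = y"
    using G y d by (auto intro: put_mor put_dom)
  have "GetM E (Put G x d) = GetM E (Put E x (GetM E (Put G y d)))"
    using G_Put_fibre[OF x y xy d] by simp
  also have "\<dots> = GetM E (Put G y d)"
    using E x q xy by (simp add: get_put get_mor get_dom)
  finally show ?thesis .
qed

lemma obtain_preimage:
  assumes "c \<in> Obj C"
  obtains x where "x \<in> Obj B" "GetO E x = c"
  using assms surj_obj by blast

definition rep :: "'co \<Rightarrow> 'bo" where
  "rep c = (SOME x. x \<in> Obj B \<and> GetO E x = c)"

lemma rep_preimage:
  assumes "c \<in> Obj C"
  shows "rep c \<in> Obj B" "GetO E (rep c) = c"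
  using someI_ex[of "\<lambda>x. x \<in> Obj B \<and> GetO E x = c"] assms surj_obj
  unfolding rep_def by blast+

definition mediator :: "('co, 'cm, 'do, 'dm) lens" where
  "mediator = \<lparr> GetO = (\<lambda>c. GetO G (rep c)),
                GetM = (\<lambda>h. GetM G (Put E (rep (Dom C h)) h)),
                Put = (\<lambda>c d. GetM E (Put G (rep c) d)) \<rparr>"

lemma mediator_GetO:
  assumes x: "x \<in> Obj B"
  shows "GetO mediator (GetO E x) = GetO G x"
proof -
  have "rep (GetO E x) \<in> Obj B" "GetO E (rep (GetO E x)) = GetO E x"
    using rep_preimage get_obj[OF E x] by auto
  then show ?thesis using G_GetO_fibre[OF _ x] unfolding mediator_def by simp
qed

lemma mediator_GetM_Put:
  assumes h: "h \<in> Mor C" and x: "x \<in> Obj B" "GetO E x = Dom C h"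
  shows "GetM mediator h = GetM G (Put E x h)"
proof -
  have "rep (Dom C h) \<in> Obj B" "GetO E (rep (Dom C h)) = Dom C h"
    using rep_preimage cat_dom[OF C h] by auto
  then have "GetM G (Put E (rep (Dom C h)) h) = GetM G (Put E x h)"
    using E x h by (intro G_GetM_fibre) (auto simp: put_mor get_put)
  then show ?thesis unfolding mediator_def by simp
qed

lemma mediator_GetM:
  assumes f: "f \<in> Mor B"
  shows "GetM mediator (GetM E f) = GetM G f"
proof -
  have x: "Dom B f \<in> Obj B" "GetO E (Dom B f) = Dom C (GetM E f)"
    using cat_dom[OF B f] get_dom[OF E f] by auto
  have "GetM mediator (GetM E f) = GetM G (Put E (Dom B f) (GetM E f))"
    using mediator_GetM_Put[OF get_mor[OF E f] x] .
  also have "\<dots> = GetM G f"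
    using E f x by (intro G_GetM_fibre) (auto simp: put_mor get_put get_mor)
  finally show ?thesis .
qed

lemma mediator_Put:
  assumes x: "x \<in> Obj B" and d: "d \<in> Mor D" "Dom D d = GetO G x"
  shows "Put mediator (GetO E x) d = GetM E (Put G x d)"
proof -
  have r: "rep (GetO E x) \<in> Obj B" "GetO E (rep (GetO E x)) = GetO E x"
    using rep_preimage get_obj[OF E x] by auto
  moreover have "Dom D d = GetO G (rep (GetO E x))"
    using G_GetO_fibre[OF r(1) x r(2)] d by simp
  ultimately show ?thesis
    using E_Put_G_fibre[OF r(1) x r(2) d(1)] unfolding mediator_def by simp
qed

lemma mediator_obj:
  assumes "c \<in> Obj C"
  shows "GetO mediator c \<in> Obj D"
proof -
  obtain x where x: "x \<in> Obj B" "c = GetO E x"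
    using obtain_preimage[OF assms] by metis
  then show ?thesis using mediator_GetO get_obj[OF G] by simp
qed

lemma mediator_mor:
  assumes h: "h \<in> Mor C"
  shows "GetM mediator h \<in> Mor D"
    and "Dom D (GetM mediator h) = GetO mediator (Dom C h)"
    and "Cod D (GetM mediator h) = GetO mediator (Cod C h)"
proof -
  obtain x where x: "x \<in> Obj B" "GetO E x = Dom C h"
    using obtain_preimage cat_dom[OF C h] .
  define p where "p = Put E x h"
  have p: "p \<in> Mor B" "Dom B p = x" "GetM E p = h"
    using E x h unfolding p_def by (auto simp: put_mor put_dom get_put)
  have Mh: "GetM mediator h = GetM G p"
    using mediator_GetM_Put[OF h x] unfolding p_def .
  show "GetM mediator h \<in> Mor D"
    using Mh get_mor[OF G p(1)] by simp
  show "Dom D (GetM mediator h) = GetO mediator (Dom C h)"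
    using Mh get_dom[OF G p(1)] p(2) mediator_GetO[OF x(1)] x(2) by simp
  show "Cod D (GetM mediator h) = GetO mediator (Cod C h)"
    using Mh get_cod[OF G p(1)] mediator_GetO[OF cat_cod[OF B p(1)]] get_cod[OF E p(1)] p(3)
    by simp
qed

lemma mediator_id:
  assumes "c \<in> Obj C"
  shows "GetM mediator (Id C c) = Id D (GetO mediator c)"
proof -
  obtain x where x: "x \<in> Obj B" "c = GetO E x"
    using obtain_preimage[OF assms] by metis
  have "GetM mediator (Id C c) = GetM mediator (GetM E (Id B x))"
    using get_id[OF E x(1)] x(2) by simp
  also have "\<dots> = Id D (GetO G x)"
    using mediator_GetM[OF cat_id[OF B x(1)]] get_id[OF G x(1)] by simp
  finally show ?thesis using mediator_GetO[OF x(1)] x(2) by simp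
qed

lemma mediator_comp:
  assumes h: "h \<in> Mor C" and g: "g \<in> Mor C" and gh: "Dom C g = Cod C h"
  shows "GetM mediator (Comp C g h) = Comp D (GetM mediator g) (GetM mediator h)"
proof -
  obtain x where x: "x \<in> Obj B" "GetO E x = Dom C h"
    using obtain_preimage cat_dom[OF C h] .
  define p where "p = Put E x h"
  have p: "p \<in> Mor B" "Dom B p = x" "GetM E p = h"
    using E x h unfolding p_def by (auto simp: put_mor put_dom get_put)
  have x': "Cod B p \<in> Obj B" "GetO E (Cod B p) = Dom C g"
    using cat_cod[OF B p(1)] get_cod[OF E p(1)] p(3) gh by auto
  define q where "q = Put E (Cod B p) g"
  have q: "q \<in> Mor B" "Dom B q = Cod B p" "GetM E q = g"
    using E x' g unfolding q_def by (auto simp: put_mor put_dom get_put)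
  have "Comp C g h = GetM E (Comp B q p)"
    using get_comp[OF E p(1) q(1,2)] p q by simp
  then have "GetM mediator (Comp C g h) = GetM G (Comp B q p)"
    using mediator_GetM cat_comp[OF B p(1) q(1,2)] by simp
  also have "\<dots> = Comp D (GetM G q) (GetM G p)"
    using get_comp[OF G p(1) q(1,2)] .
  finally show ?thesis using mediator_GetM[OF p(1)] mediator_GetM[OF q(1)] p(3) q(3) by simp
qed

lemma mediator_put:
  assumes c: "c \<in> Obj C" and d: "d \<in> Mor D" "Dom D d = GetO mediator c"
  shows "Put mediator c d \<in> Mor C"
    and "Dom C (Put mediator c d) = c"
    and "GetM mediator (Put mediator c d) = d"
proof -
  obtain x where x: "x \<in> Obj B" "c = GetO E x"
    using obtain_preimage[OF c] by metis
  have dx: "Dom D d = GetO G x" using d(2) mediator_GetO[OF x(1)] x(2) by simp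
  define q where "q = Put G x d"
  have q: "q \<in> Mor B" "Dom B q = x" "GetM G q = d"
    using G x(1) d(1) dx unfolding q_def by (auto simp: put_mor put_dom get_put)
  have Pq: "Put mediator c d = GetM E q"
    using mediator_Put[OF x(1) d(1) dx] x(2) unfolding q_def by simp
  show "Put mediator c d \<in> Mor C"
    using Pq get_mor[OF E q(1)] by simp
  show "Dom C (Put mediator c d) = c"
    using Pq get_dom[OF E q(1)] q(2) x(2) by simp
  show "GetM mediator (Put mediator c d) = d"
    using Pq mediator_GetM[OF q(1)] q(3) by simp
qed

lemma mediator_put_id:
  assumes "c \<in> Obj C"
  shows "Put mediator c (Id D (GetO mediator c)) = Id C c"
proof -
  have "Put mediator c (Id D (GetO mediator c)) = GetM E (Put G (rep c) (Id D (GetO G (rep c))))"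
    unfolding mediator_def by simp
  also have "\<dots> = Id C c"
    using put_id[OF G] get_id[OF E] rep_preimage[OF assms] by simp
  finally show ?thesis .
qed

lemma mediator_put_comp:
  assumes c: "c \<in> Obj C" and d: "d \<in> Mor D" "Dom D d = GetO mediator c"
    and d': "d' \<in> Mor D" "Dom D d' = GetO mediator (Cod C (Put mediator c d))"
  shows "Put mediator c (Comp D d' d) =
           Comp C (Put mediator (Cod C (Put mediator c d)) d') (Put mediator c d)"
proof -
  define x where "x = rep c"
  have x: "x \<in> Obj B" "GetO E x = c" and dx: "Dom D d = GetO G x"
    using rep_preimage[OF c] d(2) unfolding x_def mediator_def by simp_all
  define q where "q = Put G x d"
  have q: "q \<in> Mor B" "Put mediator c d = GetM E q"
    using put_mor[OF G x(1) d(1) dx] unfolding q_def x_def mediator_def by simp_all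
  have cod: "Cod C (Put mediator c d) = GetO E (Cod B q)"
    using q get_cod[OF E q(1)] by simp
  have dx': "Dom D d' = GetO G (Cod B q)"
    using d'(2) cod mediator_GetO[OF cat_cod[OF B q(1)]] by simp
  have "Put mediator c (Comp D d' d) = GetM E (Put G x (Comp D d' d))"
    unfolding x_def mediator_def by simp
  also have "\<dots> = GetM E (Comp B (Put G (Cod B q) d') q)"
    using put_comp[OF G x(1) d(1) d'(1) dx] dx' unfolding q_def by simp
  also have "\<dots> = Comp C (GetM E (Put G (Cod B q) d')) (GetM E q)"
    using get_comp[OF E q(1) put_mor[OF G _ d'(1) dx']] put_dom[OF G _ d'(1) dx'] cat_cod[OF B q(1)]
    by simp
  also have "GetM E (Put G (Cod B q) d') = Put mediator (Cod C (Put mediator c d)) d'"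
    using mediator_Put[OF cat_cod[OF B q(1)] d'(1) dx'] cod by simp
  finally show ?thesis using q(2) by simp
qed

lemma is_lens_mediator: "is_lens C D mediator"
  unfolding is_lens_def
  using mediator_obj mediator_mor mediator_id mediator_comp
    mediator_put mediator_put_id mediator_put_comp
  by (intro conjI ballI impI) simp_all

lemma mediator_factors: "lens_eq B D (lens_comp E mediator) G"
  unfolding lens_eq_def
proof (intro conjI ballI impI)
  fix x d assume x: "x \<in> Obj B" and d: "d \<in> Mor D" "Dom D d = GetO (lens_comp E mediator) x"
  then have dx: "Dom D d = GetO G x" using mediator_GetO unfolding lens_comp_def by simp
  have "Put (lens_comp E mediator) x d = Put E x (GetM E (Put G x d))"
    using mediator_Put[OF x d(1) dx] unfolding lens_comp_def by simp
  also have "\<dots> = Put G x d"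
    using G_Put_fibre[OF x x refl d(1) dx] by simp
  finally show "Put (lens_comp E mediator) x d = Put G x d" .
qed (simp_all add: lens_comp_def mediator_GetO mediator_GetM)

lemma mediator_unique:
  assumes H: "is_lens C D H" and HG: "lens_eq B D (lens_comp E H) G"
  shows "lens_eq C D H mediator"
proof -
  have HO: "GetO H (GetO E x) = GetO G x" if "x \<in> Obj B" for x
    using HG that unfolding lens_eq_def lens_comp_def by simp
  have HM: "GetM H (GetM E f) = GetM G f" if "f \<in> Mor B" for f
    using HG that unfolding lens_eq_def lens_comp_def by simp
  show ?thesis
    unfolding lens_eq_def
  proof (intro conjI ballI impI)
    fix c assume "c \<in> Obj C"
    then obtain x where "x \<in> Obj B" "GetO E x = c" by (rule obtain_preimage)
    then show "GetO H c = GetO mediator c" using HO mediator_GetO by auto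
  next
    fix h assume h: "h \<in> Mor C"
    obtain x where x: "x \<in> Obj B" "GetO E x = Dom C h"
      using obtain_preimage cat_dom[OF C h] .
    then have "Put E x h \<in> Mor B" "GetM E (Put E x h) = h"
      using E h by (simp_all add: put_mor get_put)
    then show "GetM H h = GetM mediator h" using HM mediator_GetM_Put[OF h x] by metis
  next
    fix c d assume c: "c \<in> Obj C" and d: "d \<in> Mor D" "Dom D d = GetO H c"
    obtain x where x: "x \<in> Obj B" "GetO E x = c" using obtain_preimage[OF c] .
    have dx: "Dom D d = GetO G x" using d(2) HO[OF x(1)] x(2) by simp
    have Hd: "Put H c d \<in> Mor C" "Dom C (Put H c d) = c"
      using put_mor[OF H c d] put_dom[OF H c d] by simp_all
    have "Put E x (Put H c d) = Put G x d"
      using HG x d(1) dx unfolding lens_eq_def lens_comp_def by auto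
    then have "GetM E (Put G x d) = Put H c d"
      using get_put[OF E x(1) Hd(1)] Hd(2) x(2) by simp
    then show "Put H c d = Put mediator c d"
      using mediator_Put[OF x(1) d(1) dx] x(2) by simp
  qed
qed

end

theorem lens_coequaliser_pk_if_surj_obj:
  fixes B :: "('bo, 'bm) cat" and C :: "('co, 'cm) cat" and E :: "('bo, 'bm, 'co, 'cm) lens"
  assumes "is_category B" "is_category C" "is_lens B C E" "Obj C \<subseteq> GetO E ` Obj B"
  shows "lens_coequaliser TYPE('do \<times> 'dm) (pk_cat B E) B C (pk_P1 E) (pk_P2 E) E"
  unfolding lens_coequaliser_def
proof (intro conjI allI impI)
  fix D :: "('do, 'dm) cat" and G
  assume "is_lens B D G"
    and "lens_eq (pk_cat B E) D (lens_comp (pk_P1 E) G) (lens_comp (pk_P2 E) G)"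
  then interpret pk_cocone B C D E G
    using assms by unfold_locales
  show "\<exists>H. is_lens C D H \<and> lens_eq B D (lens_comp E H) G \<and>
          (\<forall>H'. is_lens C D H' \<longrightarrow> lens_eq B D (lens_comp E H') G \<longrightarrow> lens_eq C D H' H)"
    using is_lens_mediator mediator_factors mediator_unique by blast
qed (use assms lens_eq_pk_comp in blast)+

theorem corollary6p4:
  fixes B :: "('bo, 'bm) cat" and C :: "('co, 'cm) cat" and E :: "('bo, 'bm, 'co, 'cm) lens"
  assumes "is_category B" and "is_category C"
    and "lens_epi B C E"
  shows "lens_coequaliser TYPE('do \<times> 'dm) (pk_cat B E) B C (pk_P1 E) (pk_P2 E) E"
proof -
  have "is_lens B C E" using assms(3) unfolding lens_epi_def by blast
  then show ?thesis
    using lens_coequaliser_pk_if_surj_obj assms(1,2) lens_epi_surj_obj[OF assms] by blast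
qed

end
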